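(* Let $n\ge 1$, $K\ge 1$ be integers and $p_n\in[0,1]$. Let $(\mathcal{G}(n),\mathcal{A}(n))$ be the output of the Threshold exploration algorithm and let $(G(n,p_n),\mathcal{I}(n))$ be the graph and final active set of the Threshold model (both described in the context). Then the joint distribution of $(\mathcal{G}(n),\mathcal{A}(n))$ is identical to the joint distribution of $(G(n,p_n),\mathcal{I}(n))$.
   Context: $G(n,p_n)$ is the Erdős–Rényi random graph on vertex set $[n]=\{1,\dots,n\}$, each of the pairs $\{u,v\}$, $u\ne v$, being an edge independently with probability $p_n$. For a graph $G$ and vertex set $U$, $G_U$ is the induced subgraph and $d_{\max}$ the maximum degree. Threshold model: given a realization of $G(n,p_n)$, set $\mathcal{I}(0)=\varnothing$. At each step $t+1$ ($0\le t\le n-1$), a vertex $v$ is chosen uniformly at random among vertices not selected before (independently of the graph); if $d_{\max}(G_{\mathcal{I}(t)\cup\{v\}})<K$ set $\mathcal{I}(t+1)=\mathcal{I}(t)\cup\{v\}$, otherwise $\mathcal{I}(t+1)=\mathcal{I}(t)$. $\mathcal{I}(n)$ is the final (maximal greedy $K$-independent) set. Threshold exploration algorithm: maintain sets $\mathcal{A}_0(t),\dots,\mathcal{A}_{K-1}(t)$ (active vertices with exactly $k$ active neighbours), $\mathcal{B}(t)$ (frozen vertices) and $\mathcal{U}(t)$ (unexplored vertices), initially $\mathcal{A}_k(0)=\mathcal{B}(0)=\varnothing$, $\mathcal{U}(0)=[n]$; let $\mathcal{A}(t)=\bigcup_k\mathcal{A}_k(t)$. At step $t+1$, select $v\in\mathcal{U}(t)$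 uniformly at random, remove it from $\mathcal{U}$, and for each $u\in\mathcal{A}(t)\cup\mathcal{B}(t)$ independently add the edge $\{v,u\}$ with probability $p_n$. Let $v_1,\dots,v_r$ ($r\ge0$) be the vertices of $\mathcal{A}(t)$ joined to $v$, with $v_i\in\mathcal{A}_{k_i}(t)$. If $r<K$ and no $v_i$ lies in $\mathcal{A}_{K-1}(t)$, then $v$ is put into $\mathcal{A}_r$ and each $v_i$ is moved from $\mathcal{A}_{k_i}$ to $\mathcal{A}_{k_i+1}$; otherwise $v$ is put into $\mathcal{B}$ and the sets $\mathcal{A}_k$ are unchanged. After $n$ steps the algorithm outputs $\mathcal{A}(n)$ and the graph $\mathcal{G}(n)$ on $[n]$ formed by all edges added. *)

theory Defs
  imports "HOL-Probability.Probability"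
begin

text \<open>Graphs on vertex set [n] = {1..n} are represented by their edge sets;
an edge {u,v} (u \<noteq> v) is the two-element set {u,v}.\<close>

definition vertex_pairs :: "nat \<Rightarrow> nat set set" where
  "vertex_pairs n = {e. \<exists>u v. u \<in> {1..n} \<and> v \<in> {1..n} \<and> u \<noteq> v \<and> e = {u, v}}"

definition erdos_renyi :: "nat \<Rightarrow> real \<Rightarrow> nat set set pmf" where
  "erdos_renyi n p =
     map_pmf (\<lambda>f. {e \<in> vertex_pairs n. f e})
             (Pi_pmf (vertex_pairs n) False (\<lambda>_. bernoulli_pmf p))"

definition deg_in :: "nat set set \<Rightarrow> nat set \<Rightarrow> nat \<Rightarrow> nat" where
  "deg_in E U u = card {w \<in> U. {u, w} \<in> E}"

definition dmax_induced :: "nat set set \<Rightarrow> nat set \<Rightarrow> nat" where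
  "dmax_induced E U = (if U = {} then 0 else Max (deg_in E U ` U))"

fun iter_pmf :: "nat \<Rightarrow> ('s \<Rightarrow> 's pmf) \<Rightarrow> 's \<Rightarrow> 's pmf" where
  "iter_pmf 0 f s = return_pmf s"
| "iter_pmf (Suc t) f s = bind_pmf (f s) (iter_pmf t f)"

text \<open>Threshold model. State: (I(t), set of vertices selected so far).\<close>
definition threshold_step ::
  "nat \<Rightarrow> nat \<Rightarrow> nat set set \<Rightarrow> nat set \<times> nat set \<Rightarrow> (nat set \<times> nat set) pmf" where
  "threshold_step n K E st =
     (case st of (I, S) \<Rightarrow>
        map_pmf (\<lambda>v. (if dmax_induced E (I \<union> {v}) < K then I \<union> {v} else I, S \<union> {v}))
                (pmf_of_set ({1..n} - S)))"

definition threshold_model :: "nat \<Rightarrow> nat \<Rightarrow> nat set set \<Rightarrow> nat set pmf" where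
  "threshold_model n K E = map_pmf fst (iter_pmf n (threshold_step n K E) ({}, {}))"

text \<open>Threshold exploration algorithm.  Actk k = A_k(t), Bset = B(t), Uset = U(t),
  Edges = edges added so far.\<close>
record expl_state =
  Actk :: "nat \<Rightarrow> nat set"
  Bset :: "nat set"
  Uset :: "nat set"
  Edges :: "nat set set"

definition active_set :: "nat \<Rightarrow> expl_state \<Rightarrow> nat set" where
  "active_set K s = (\<Union>k<K. Actk s k)"

definition expl_update :: "nat \<Rightarrow> expl_state \<Rightarrow> nat \<Rightarrow> (nat \<Rightarrow> bool) \<Rightarrow> expl_state" where
  "expl_update K s v f =
     (let R = {u \<in> active_set K s. f u};
          r = card R;
          newE = Edges s \<union> {{v, u} | u. u \<in> active_set K s \<union> Bset s \<and> f u};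
          U' = Uset s - {v}
      in if r < K \<and> (\<forall>u\<in>R. u \<notin> Actk s (K - 1)) then
           \<lparr> Actk = (\<lambda>k. {u. (u \<in> Actk s k \<and> u \<notin> R)
                             \<or> (0 < k \<and> u \<in> R \<and> u \<in> Actk s (k - 1))
                             \<or> (u = v \<and> k = r)}),
             Bset = Bset s, Uset = U', Edges = newE \<rparr>
         else
           \<lparr> Actk = Actk s, Bset = Bset s \<union> {v}, Uset = U', Edges = newE \<rparr>)"

definition expl_step :: "nat \<Rightarrow> real \<Rightarrow> expl_state \<Rightarrow> expl_state pmf" where
  "expl_step K p s =
     do { v \<leftarrow> pmf_of_set (Uset s);
          f \<leftarrow> Pi_pmf (active_set K s \<union> Bset s) False (\<lambda>_. bernoulli_pmf p);
          return_pmf (expl_update K s v f) }"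

definition expl_init :: "nat \<Rightarrow> expl_state" where
  "expl_init n = \<lparr> Actk = (\<lambda>_. {}), Bset = {}, Uset = {1..n}, Edges = {} \<rparr>"

definition threshold_exploration :: "nat \<Rightarrow> nat \<Rightarrow> real \<Rightarrow> (nat set set \<times> nat set) pmf" where
  "threshold_exploration n K p =
     map_pmf (\<lambda>s. (Edges s, active_set K s)) (iter_pmf n (expl_step K p) (expl_init n))"

definition threshold_model_joint :: "nat \<Rightarrow> nat \<Rightarrow> real \<Rightarrow> (nat set set \<times> nat set) pmf" where
  "threshold_model_joint n K p =
     do { E \<leftarrow> erdos_renyi n p; I \<leftarrow> threshold_model n K E; return_pmf (E, I) }"

end

theory Submission
  imports Defs
begin

text \<open>Both processes reveal the vertices in the same uniformly random order. When the exploration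
  reveals v, it samples exactly the pairs between v and the previously revealed vertices, and from
  them it can decide whether v joins the active set, because the threshold rule at v only reads
  pairs inside the revealed set. Hence, by induction over the number of remaining steps, an
  exploration that has revealed S with active set I and revealed edges E0 has the same output law
  as the threshold model started in (I, S) on E0 together with an independent p-random subset of
  the pairs not contained in S. Starting from S = {} this is exactly G(n, p).\<close>

definition random_subset :: "real \<Rightarrow> 'a set \<Rightarrow> 'a set pmf" where
  "random_subset p P = map_pmf (\<lambda>f. {e \<in> P. f e}) (Pi_pmf P False (\<lambda>_. bernoulli_pmf p))"

lemma random_subset_empty [simp]: "random_subset p {} = return_pmf {}"
  by (simp add: random_subset_def)

lemma set_pmf_random_subset: "X \<in> set_pmf (random_subset p P) \<Longrightarrow> X \<subseteq> P"
  by (auto simp: random_subset_def)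

lemma random_subset_Un:
  assumes "finite A" "finite B" "A \<inter> B = {}"
  shows "random_subset p (A \<union> B) =
    do { X \<leftarrow> random_subset p A; Y \<leftarrow> random_subset p B; return_pmf (X \<union> Y) }"
proof -
  have "random_subset p (A \<union> B) = map_pmf (\<lambda>(f, g). {e \<in> A. f e} \<union> {e \<in> B. g e})
      (pair_pmf (Pi_pmf A False (\<lambda>_. bernoulli_pmf p)) (Pi_pmf B False (\<lambda>_. bernoulli_pmf p)))"
    unfolding random_subset_def using assms
    by (subst Pi_pmf_union) (auto simp: map_pmf_comp case_prod_unfold intro!: map_pmf_cong)
  then show ?thesis
    by (simp add: random_subset_def pair_pmf_def map_bind_pmf bind_map_pmf bind_return_pmf)
qed

lemma map_Pi_pmf_eq_random_subset_image:
  assumes "finite S" "inj g"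
  shows "map_pmf (\<lambda>f. {g u | u. u \<in> S \<and> f u}) (Pi_pmf S False (\<lambda>_. bernoulli_pmf p))
       = random_subset p (g ` S)"
proof -
  have "Pi_pmf S False (\<lambda>_. bernoulli_pmf p) =
      map_pmf (\<lambda>h. h \<circ> g) (Pi_pmf (g ` S) False (\<lambda>_. bernoulli_pmf p))"
    using assms by (intro Pi_pmf_bij_betw) (auto simp: bij_betw_def inj_on_def inj_def)
  then show ?thesis
    by (auto simp: random_subset_def map_pmf_comp intro!: map_pmf_cong)
qed

lemma vertex_pairsI: "a \<in> {1..n} \<Longrightarrow> b \<in> {1..n} \<Longrightarrow> a \<noteq> b \<Longrightarrow> {a, b} \<in> vertex_pairs n"
  unfolding vertex_pairs_def by blast

lemma finite_vertex_pairs: "finite (vertex_pairs n)"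
  by (rule finite_subset[of _ "Pow {1..n}"]) (auto simp: vertex_pairs_def)

lemma erdos_renyi_eq_random_subset: "erdos_renyi n p = random_subset p (vertex_pairs n)"
  by (simp add: erdos_renyi_def random_subset_def)

definition pairs_leaving :: "nat \<Rightarrow> nat set \<Rightarrow> nat set set" where
  "pairs_leaving n S = {e \<in> vertex_pairs n. \<not> e \<subseteq> S}"

lemma finite_pairs_leaving: "finite (pairs_leaving n S)"
  by (rule finite_subset[OF _ finite_vertex_pairs]) (auto simp: pairs_leaving_def)

lemma pairs_leaving_empty: "pairs_leaving n {} = vertex_pairs n"
  by (auto simp: pairs_leaving_def vertex_pairs_def)

lemma pairs_leaving_all: "pairs_leaving n {1..n} = {}"
  by (auto simp: pairs_leaving_def vertex_pairs_def)

lemma pairs_leaving_insert: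
  assumes "v \<in> {1..n}" "v \<notin> S" "S \<subseteq> {1..n}"
  shows "pairs_leaving n S = (\<lambda>u. {v, u}) ` S \<union> pairs_leaving n (insert v S)"
proof (intro set_eqI iffI)
  fix e assume e: "e \<in> pairs_leaving n S"
  then obtain a b where ab: "e = {a, b}" "a \<noteq> b" "\<not> e \<subseteq> S"
    by (auto simp: pairs_leaving_def vertex_pairs_def)
  show "e \<in> (\<lambda>u. {v, u}) ` S \<union> pairs_leaving n (insert v S)"
  proof (cases "e \<subseteq> insert v S")
    case True
    then have "(a = v \<and> b \<in> S) \<or> (b = v \<and> a \<in> S)" using ab by auto
    then show ?thesis using ab by (auto simp: insert_commute)
  qed (use e in \<open>auto simp: pairs_leaving_def\<close>)
next
  fix e assume "e \<in> (\<lambda>u. {v, u}) ` S \<union> pairs_leaving n (insert v S)"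
  then show "e \<in> pairs_leaving n S"
    using assms by (auto simp: pairs_leaving_def intro!: vertex_pairsI)
qed

lemma dmax_induced_less_iff:
  "finite U \<Longrightarrow> U \<noteq> {} \<Longrightarrow> dmax_induced E U < K \<longleftrightarrow> (\<forall>u\<in>U. deg_in E U u < K)"
  by (simp add: dmax_induced_def)

lemma dmax_induced_cong:
  assumes "\<And>u w. u \<in> U \<Longrightarrow> w \<in> U \<Longrightarrow> {u, w} \<in> E1 \<longleftrightarrow> {u, w} \<in> E2"
  shows "dmax_induced E1 U = dmax_induced E2 U"
proof -
  have "deg_in E1 U u = deg_in E2 U u" if "u \<in> U" for u
    unfolding deg_in_def using assms that by (intro arg_cong[where f = card]) auto
  then show ?thesis unfolding dmax_induced_def by (auto intro!: arg_cong[where f = Max])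
qed

definition threshold_add :: "nat \<Rightarrow> nat set set \<Rightarrow> nat set \<Rightarrow> nat \<Rightarrow> nat set" where
  "threshold_add K E I v = (if dmax_induced E (insert v I) < K then insert v I else I)"

text \<open>The exploration state encoding the threshold model state (I, S) on the revealed edges E:
  A_k consists of the vertices of degree k in E_I, and the frozen vertices are S - I.\<close>
definition expl_state_of :: "nat \<Rightarrow> nat set set \<Rightarrow> nat set \<Rightarrow> nat set \<Rightarrow> expl_state" where
  "expl_state_of n E I S = \<lparr> Actk = (\<lambda>k. {u \<in> I. deg_in E I u = k}), Bset = S - I,
                             Uset = {1..n} - S, Edges = E \<rparr>"

lemma active_set_expl_state_of:
  "\<forall>u\<in>I. deg_in E I u < K \<Longrightarrow> active_set K (expl_state_of n E I S) = I"
  by (auto simp: active_set_def expl_state_of_def)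

locale expl_update_setting =
  fixes n K :: nat and E0 :: "nat set set" and I S :: "nat set"
    and v :: nat and f :: "nat \<Rightarrow> bool"
  assumes v: "v \<in> {1..n}" "v \<notin> S" and S: "S \<subseteq> {1..n}" and I: "I \<subseteq> S"
    and E0: "\<Union>E0 \<subseteq> S" and deg_less: "\<forall>u\<in>I. deg_in E0 I u < K" and K: "K \<ge> 1"
begin

definition "E1 = E0 \<union> {{v, u} | u. u \<in> S \<and> f u}"

definition "R = {u \<in> I. f u}"

lemma finite_I: "finite I"
  using I S by (meson finite_atLeastAtMost finite_subset)

lemma v_notin_I: "v \<notin> I"
  using v I by auto

lemma edge_to_v_notin_E0: "{v, w} \<notin> E0" "{w, v} \<notin> E0"
  using E0 v by auto

lemma deg_in_new_vertex: "deg_in E1 (insert v I) v = card R"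
proof -
  have "{w \<in> insert v I. {v, w} \<in> E1} = R"
    using edge_to_v_notin_E0 v I unfolding E1_def R_def by (auto simp: doubleton_eq_iff)
  then show ?thesis by (simp add: deg_in_def)
qed

lemma deg_in_old_vertex:
  assumes u: "u \<in> I"
  shows "deg_in E1 (insert v I) u = deg_in E0 I u + (if f u then 1 else 0)"
proof -
  have "{w \<in> insert v I. {u, w} \<in> E1} = {w \<in> I. {u, w} \<in> E0} \<union> (if f u then {v} else {})"
    using edge_to_v_notin_E0 u v I unfolding E1_def by (auto simp: doubleton_eq_iff insert_commute)
  moreover have "v \<notin> {w \<in> I. {u, w} \<in> E0}" "finite {w \<in> I. {u, w} \<in> E0}"
    using v_notin_I finite_I by auto
  ultimately show ?thesis unfolding deg_in_def by auto
qed

lemma deg_in_unchanged: "u \<in> I \<Longrightarrow> deg_in E1 I u = deg_in E0 I u"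
  using v I unfolding deg_in_def E1_def by (auto simp: doubleton_eq_iff intro!: arg_cong[where f = card])

lemma threshold_accepts_iff:
  "dmax_induced E1 (insert v I) < K \<longleftrightarrow>
     card R < K \<and> (\<forall>u\<in>R. u \<notin> Actk (expl_state_of n E0 I S) (K - 1))"
proof -
  have "dmax_induced E1 (insert v I) < K \<longleftrightarrow> (\<forall>u\<in>insert v I. deg_in E1 (insert v I) u < K)"
    using finite_I by (intro dmax_induced_less_iff) auto
  also have "\<dots> \<longleftrightarrow> card R < K \<and> (\<forall>u\<in>I. deg_in E0 I u + (if f u then 1 else 0) < K)"
    using deg_in_new_vertex deg_in_old_vertex by auto
  also have "\<dots> \<longleftrightarrow> card R < K \<and> (\<forall>u\<in>R. u \<notin> Actk (expl_state_of n E0 I S) (K - 1))"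
    using deg_less K by (force simp: R_def expl_state_of_def)
  finally show ?thesis .
qed

lemma deg_in_threshold_add_less: "\<forall>u\<in>threshold_add K E1 I v. deg_in E1 (threshold_add K E1 I v) u < K"
  using deg_less deg_in_unchanged dmax_induced_less_iff[of "insert v I" E1 K] finite_I
  by (auto simp: threshold_add_def)

lemma expl_update_expl_state_of:
  "expl_update K (expl_state_of n E0 I S) v f =
     expl_state_of n E1 (threshold_add K E1 I v) (insert v S)"
proof -
  let ?s = "expl_state_of n E0 I S"
  have act: "active_set K ?s = I"
    using deg_less by (rule active_set_expl_state_of)
  then have AB: "active_set K ?s \<union> Bset ?s = S"
    using I by (auto simp: expl_state_of_def)
  have new_edges: "Edges ?s \<union> {{v, u} | u. u \<in> active_set K ?s \<union> Bset ?s \<and> f u} = E1"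
    unfolding AB by (simp add: expl_state_of_def E1_def)
  have hit: "{u \<in> active_set K ?s. f u} = R"
    unfolding act R_def ..
  show ?thesis
  proof (cases "dmax_induced E1 (insert v I) < K")
    case True
    have "{u. (u \<in> Actk ?s k \<and> u \<notin> R) \<or> (0 < k \<and> u \<in> R \<and> u \<in> Actk ?s (k - 1))
              \<or> (u = v \<and> k = card R)}
          = {u \<in> insert v I. deg_in E1 (insert v I) u = k}" for k
    proof (intro set_eqI)
      fix u
      show "u \<in> {u. (u \<in> Actk ?s k \<and> u \<notin> R) \<or> (0 < k \<and> u \<in> R \<and> u \<in> Actk ?s (k - 1))
              \<or> (u = v \<and> k = card R)} \<longleftrightarrow> u \<in> {u \<in> insert v I. deg_in E1 (insert v I) u = k}"
        using deg_in_new_vertex deg_in_old_vertex[of u] v_notin_I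
        by (cases "u \<in> I") (auto simp: expl_state_of_def R_def)
    qed
    then show ?thesis
      using True threshold_accepts_iff unfolding expl_update_def Let_def new_edges hit
      by (simp add: expl_state_of_def threshold_add_def fun_eq_iff) (auto simp: v)
  next
    case False
    have "Actk ?s = (\<lambda>k. {u \<in> I. deg_in E1 I u = k})"
      using deg_in_unchanged by (auto simp: expl_state_of_def)
    then show ?thesis
      using False threshold_accepts_iff unfolding expl_update_def Let_def new_edges hit
      by (simp add: threshold_add_def) (auto simp: expl_state_of_def v v_notin_I)
  qed
qed

end

definition threshold_model_from ::
  "nat \<Rightarrow> nat \<Rightarrow> real \<Rightarrow> nat \<Rightarrow> nat set set \<Rightarrow> nat set \<Rightarrow> nat set \<Rightarrow> (nat set set \<times> nat set) pmf" where
  "threshold_model_from n K p m E0 I S =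
     do { F \<leftarrow> random_subset p (pairs_leaving n S);
          J \<leftarrow> map_pmf fst (iter_pmf m (threshold_step n K (E0 \<union> F)) (I, S));
          return_pmf (E0 \<union> F, J) }"

lemma threshold_model_from_Suc:
  assumes S: "S \<subset> {1..n}" and I: "I \<subseteq> S"
  shows "threshold_model_from n K p (Suc m) E0 I S =
    do { v \<leftarrow> pmf_of_set ({1..n} - S);
         A \<leftarrow> random_subset p ((\<lambda>u. {v, u}) ` S);
         threshold_model_from n K p m (E0 \<union> A) (threshold_add K (E0 \<union> A) I v) (insert v S) }"
proof -
  define G where "G v E = map_pmf (\<lambda>J. (E, J))
      (map_pmf fst (iter_pmf m (threshold_step n K E) (threshold_add K E I v, insert v S)))" for v E
  have "threshold_model_from n K p (Suc m) E0 I S =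
      do { F \<leftarrow> random_subset p (pairs_leaving n S); v \<leftarrow> pmf_of_set ({1..n} - S); G v (E0 \<union> F) }"
    by (simp add: threshold_model_from_def G_def threshold_add_def threshold_step_def map_bind_pmf
        bind_map_pmf bind_assoc_pmf map_pmf_def[symmetric] cong: if_cong)
  also have "\<dots> = do { v \<leftarrow> pmf_of_set ({1..n} - S); F \<leftarrow> random_subset p (pairs_leaving n S);
      G v (E0 \<union> F) }"
    by (rule bind_commute_pmf)
  also have "\<dots> = do { v \<leftarrow> pmf_of_set ({1..n} - S); A \<leftarrow> random_subset p ((\<lambda>u. {v, u}) ` S);
      threshold_model_from n K p m (E0 \<union> A) (threshold_add K (E0 \<union> A) I v) (insert v S) }"
  proof (rule bind_pmf_cong[OF refl])
    fix v assume "v \<in> set_pmf (pmf_of_set ({1..n} - S))"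
    moreover have "{1..n} - S \<noteq> {}" using S by auto
    ultimately have v: "v \<in> {1..n}" "v \<notin> S" by auto
    have "finite S" "S \<subseteq> {1..n}" using S finite_subset by auto
    have "random_subset p (pairs_leaving n S) = do { A \<leftarrow> random_subset p ((\<lambda>u. {v, u}) ` S);
        B \<leftarrow> random_subset p (pairs_leaving n (insert v S)); return_pmf (A \<union> B) }"
      unfolding pairs_leaving_insert[OF v \<open>S \<subseteq> {1..n}\<close>]
      by (rule random_subset_Un[OF finite_imageI[OF \<open>finite S\<close>] finite_pairs_leaving])
        (auto simp: pairs_leaving_def)
    moreover have "G v (E0 \<union> (A \<union> B)) = map_pmf (\<lambda>J. (E0 \<union> A \<union> B, J))
        (map_pmf fst (iter_pmf m (threshold_step n K (E0 \<union> A \<union> B))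
          (threshold_add K (E0 \<union> A) I v, insert v S)))"
      if "B \<in> set_pmf (random_subset p (pairs_leaving n (insert v S)))" for A B
    proof -
      \<comment> \<open>pairs leaving the revealed set are never read by the decision at v\<close>
      have "dmax_induced (E0 \<union> A \<union> B) (insert v I) = dmax_induced (E0 \<union> A) (insert v I)"
        using set_pmf_random_subset[OF that] I by (intro dmax_induced_cong) (auto simp: pairs_leaving_def)
      then show ?thesis by (simp add: G_def threshold_add_def Un_assoc)
    qed
    ultimately show "do { F \<leftarrow> random_subset p (pairs_leaving n S); G v (E0 \<union> F) } =
        do { A \<leftarrow> random_subset p ((\<lambda>u. {v, u}) ` S);
          threshold_model_from n K p m (E0 \<union> A) (threshold_add K (E0 \<union> A) I v) (insert v S) }"
      by (simp add: threshold_model_from_def bind_assoc_pmf bind_return_pmf map_pmf_def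
          cong: bind_pmf_cong)
  qed
  finally show ?thesis .
qed

lemma exploration_eq_threshold_model_from:
  assumes "K \<ge> 1"
  shows "m = n - card S \<Longrightarrow> S \<subseteq> {1..n} \<Longrightarrow> I \<subseteq> S \<Longrightarrow> \<Union>E0 \<subseteq> S \<Longrightarrow>
    \<forall>u\<in>I. deg_in E0 I u < K \<Longrightarrow>
    map_pmf (\<lambda>s. (Edges s, active_set K s)) (iter_pmf m (expl_step K p) (expl_state_of n E0 I S))
      = threshold_model_from n K p m E0 I S"
proof (induction m arbitrary: E0 I S)
  case 0
  then have "S = {1..n}"
    by (intro card_seteq) auto
  then have "pairs_leaving n S = {}"
    by (simp only: pairs_leaving_all)
  with 0 show ?case
    by (simp add: threshold_model_from_def bind_return_pmf active_set_expl_state_of)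
       (simp add: expl_state_of_def)
next
  case (Suc m)
  let ?U = "{1..n} - S"
  have S: "S \<subseteq> {1..n}" and I: "I \<subseteq> S" using Suc.prems by auto
  have "finite S" using S by (rule finite_subset) simp
  have "?U \<noteq> {}" using Suc.prems(1) S by auto
  have "active_set K (expl_state_of n E0 I S) = I"
    using Suc.prems(5) by (rule active_set_expl_state_of)
  then have AB: "active_set K (expl_state_of n E0 I S) \<union> Bset (expl_state_of n E0 I S) = S"
    using I by (auto simp: expl_state_of_def)
  have "map_pmf (\<lambda>s. (Edges s, active_set K s)) (iter_pmf (Suc m) (expl_step K p) (expl_state_of n E0 I S))
      = do { v \<leftarrow> pmf_of_set ?U; f \<leftarrow> Pi_pmf S False (\<lambda>_. bernoulli_pmf p);
             map_pmf (\<lambda>s. (Edges s, active_set K s))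
               (iter_pmf m (expl_step K p) (expl_update K (expl_state_of n E0 I S) v f)) }"
    by (simp add: expl_step_def AB map_bind_pmf bind_assoc_pmf bind_return_pmf)
       (simp add: expl_state_of_def)
  also have "\<dots> = do { v \<leftarrow> pmf_of_set ?U; f \<leftarrow> Pi_pmf S False (\<lambda>_. bernoulli_pmf p);
      threshold_model_from n K p m (E0 \<union> {{v, u} | u. u \<in> S \<and> f u})
        (threshold_add K (E0 \<union> {{v, u} | u. u \<in> S \<and> f u}) I v) (insert v S) }"
  proof (intro bind_pmf_cong refl)
    fix v f assume "v \<in> set_pmf (pmf_of_set ?U)"
    then have v: "v \<in> {1..n}" "v \<notin> S" using \<open>?U \<noteq> {}\<close> by auto
    interpret expl_update_setting n K E0 I S v f
      using v Suc.prems assms by unfold_locales auto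
    have "\<Union>E1 \<subseteq> insert v S" "threshold_add K E1 I v \<subseteq> insert v S" "m = n - card (insert v S)"
      using Suc.prems v \<open>finite S\<close> by (auto simp: E1_def threshold_add_def)
    then show "map_pmf (\<lambda>s. (Edges s, active_set K s))
          (iter_pmf m (expl_step K p) (expl_update K (expl_state_of n E0 I S) v f))
        = threshold_model_from n K p m (E0 \<union> {{v, u} | u. u \<in> S \<and> f u})
            (threshold_add K (E0 \<union> {{v, u} | u. u \<in> S \<and> f u}) I v) (insert v S)"
      using Suc.IH v S deg_in_threshold_add_less
      by (simp add: expl_update_expl_state_of E1_def)
  qed
  also have "\<dots> = threshold_model_from n K p (Suc m) E0 I S"
  proof -
    have "inj (\<lambda>u. {v, u})" for v :: nat
      by (auto simp: inj_def doubleton_eq_iff)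
    moreover have "S \<subset> {1..n}" using S \<open>?U \<noteq> {}\<close> by auto
    ultimately show ?thesis
      using \<open>finite S\<close>
      by (simp add: threshold_model_from_Suc[OF _ I] map_Pi_pmf_eq_random_subset_image[symmetric]
          bind_map_pmf)
  qed
  finally show ?case .
qed

theorem proposition1:
  fixes n K :: nat and p :: real
  assumes "n \<ge> 1" and "K \<ge> 1" and "0 \<le> p" and "p \<le> 1"
  shows "threshold_exploration n K p = threshold_model_joint n K p"
proof -
  have "expl_init n = expl_state_of n {} {} {}"
    by (simp add: expl_init_def expl_state_of_def)
  then have "threshold_exploration n K p = threshold_model_from n K p n {} {} {}"
    unfolding threshold_exploration_def
    by (simp add: exploration_eq_threshold_model_from[OF assms(2)])
  also have "\<dots> = threshold_model_joint n K p"
    by (simp add: threshold_model_from_def threshold_model_joint_def threshold_model_def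
        erdos_renyi_eq_random_subset pairs_leaving_empty map_pmf_def)
  finally show ?thesis .
qed

end
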